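(* Let $m\ge1$ and let $X_i^j$, $1\le i\le m$, $1\le j\le4$, be i.i.d. $\mathcal{N}(0,\Sigma)$ random vectors in $\mathbb{R}^d$. Let $Z_i=\frac14\langle X_i^1-X_i^3,X_i^2-X_i^4\rangle^2$. Then for all $q\in\mathbb{N}$, $$\mathbb{E}\Big[\Big(\frac1m\sum_{i=1}^mZ_i-\operatorname{Tr}\Sigma^2\Big)^{2q}\Big]\le\Big(4\sqrt2\,\phi\,q^2\frac{\operatorname{Tr}\Sigma^2}{\sqrt m}\Big)^{2q},$$ where $\phi=(1+\sqrt5)/2$.
   Context: $\operatorname{Tr}$ denotes the trace; $\mathbb{N}=\{0,1,2,\dots\}$ with $0^0=1$. *)

theory Defs
  imports "HOL-Probability.Probability"
begin

definition centered_gaussian_vector ::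
  "'a measure \<Rightarrow> ('a \<Rightarrow> real^'d) \<Rightarrow> real^'d^'d \<Rightarrow> bool" where
  "centered_gaussian_vector M X S \<longleftrightarrow>
     X \<in> borel_measurable M \<and>
     (\<forall>v::real^'d. let s = v \<bullet> (S *v v) in
        distr M borel (\<lambda>\<omega>. v \<bullet> X \<omega>) =
          (if s = 0 then return borel 0
           else density lborel (normal_density 0 (sqrt s))))"

end

theory Submission
  imports Defs
begin

text \<open>
  Put \<open>Y\<^sub>i = Z\<^sub>i - Tr \<Sigma>\<^sup>2\<close> and \<open>B\<^sub>i = X\<^sub>i\<^sup>2 - X\<^sub>i\<^sup>4\<close>. Conditionally on \<open>B\<^sub>i\<close>, the inner product
  \<open>\<langle>X\<^sub>i\<^sup>1 - X\<^sub>i\<^sup>3, B\<^sub>i\<rangle>\<close> is centred normal with variance \<open>2 B\<^sub>i\<^sup>T \<Sigma> B\<^sub>i\<close>, so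
  \<open>E Z\<^sub>i\<^sup>k = (2k-1)!! E (B\<^sub>i\<^sup>T \<Sigma> B\<^sub>i / 2)\<^sup>k\<close>. Writing \<open>\<Sigma> = \<Sum>\<^sub>j w\<^sub>j w\<^sub>j\<^sup>T\<close>, the quadratic form
  \<open>B\<^sup>T \<Sigma> B = \<Sum>\<^sub>j \<langle>w\<^sub>j, B\<rangle>\<^sup>2\<close> is a sum of squared Gaussians, and Jensen's inequality with weights
  proportional to \<open>w\<^sub>j\<^sup>T \<Sigma> w\<^sub>j\<close> gives \<open>E Z\<^sub>i\<^sup>k \<le> ((2k-1)!!)\<^sup>2 (Tr \<Sigma>\<^sup>2)\<^sup>k \<le> k\<^sup>2\<^sup>k (Tr \<Sigma>\<^sup>2)\<^sup>k\<close>.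
  Hence the \<open>Y\<^sub>i\<close> are independent and centred with \<open>E |Y\<^sub>i|\<^sup>n \<le> 2 n\<^sup>2\<^sup>n (Tr \<Sigma>\<^sup>2)\<^sup>n\<close>.
  Adding one summand at a time and expanding \<open>(Y + S)\<^sup>n\<close> binomially (the linear term vanishes)
  gives by induction \<open>|E (\<Sum>\<^sub>i Y\<^sub>i)\<^sup>n| \<le> (2 n\<^sup>2 Tr \<Sigma>\<^sup>2)\<^sup>n m\<^sup>n\<^sup>/\<^sup>2\<close>; for \<open>n = 2q\<close> this is the claim
  with the constant \<open>8 \<le> 4 \<surd>2 \<phi>\<close>.
\<close>

section \<open>Elementary inequalities\<close>

text \<open>The \<open>2k\<close>-th moment \<open>(2k - 1)!!\<close> of a standard normal variable.\<close>

definition gauss_moment :: "nat \<Rightarrow> real" where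
  "gauss_moment k = fact (2 * k) / (2 ^ k * fact k)"

lemma gauss_moment_0 [simp]: "gauss_moment 0 = 1"
  by (simp add: gauss_moment_def)

lemma gauss_moment_Suc: "gauss_moment (Suc k) = (2 * real k + 1) * gauss_moment k"
proof -
  have "gauss_moment (Suc k)
      = (2 * (real k + 1)) * ((2 * real k + 1) * fact (2 * k)) / ((2 * (real k + 1)) * (2 ^ k * fact k))"
    unfolding gauss_moment_def by (simp add: algebra_simps)
  then show ?thesis
    by (simp add: gauss_moment_def del: mult_divide_mult_cancel_left_if)
qed

lemma gauss_moment_pos: "0 < gauss_moment k"
  by (simp add: gauss_moment_def)

lemma gauss_moment_le_power: "gauss_moment k \<le> real k ^ k"
proof (induction k)
  case 0
  then show ?case by simp
next
  case (Suc k)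
  show ?case
  proof (cases "k = 0")
    case True
    then show ?thesis by (simp add: gauss_moment_Suc)
  next
    case False
    then have k: "real k > 0" by simp
    have "1 + real k * (1 / real k) \<le> (1 + 1 / real k) ^ k"
      by (rule Bernoulli_inequality) (use k in \<open>simp add: order_trans[of _ 0]\<close>)
    then have "2 * real k ^ k \<le> (1 + 1 / real k) ^ k * real k ^ k"
      using k by (intro mult_right_mono) auto
    also have "\<dots> = (real k + 1) ^ k"
      using k by (simp add: power_mult_distrib[symmetric] field_simps)
    finally have two: "2 * real k ^ k \<le> (real k + 1) ^ k" .
    have "gauss_moment (Suc k) \<le> (2 * real k + 1) * real k ^ k"
      using Suc.IH by (simp add: gauss_moment_Suc mult_left_mono)
    also have "\<dots> \<le> (real k + 1) * (2 * real k ^ k)"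
      by (simp add: algebra_simps)
    also have "\<dots> \<le> (real k + 1) * (real k + 1) ^ k"
      using two by (simp add: mult_left_mono)
    finally show ?thesis by (simp add: add.commute)
  qed
qed

lemma sqrt_succ_power_ge:
  fixes x :: real
  assumes x: "0 \<le> x"
  shows "sqrt x ^ (n + 2) + real (n + 2) / 2 * sqrt x ^ n \<le> sqrt (x + 1) ^ (n + 2)"
proof (induction n rule: nat_induct2)
  case 0
  then show ?case
    using x by simp
next
  case 1
  have "(sqrt x ^ 3 + 3/2 * sqrt x) ^ 2 = x ^ 3 + 3 * x ^ 2 + 9/4 * x"
    using x by (simp add: power2_eq_square eval_nat_numeral algebra_simps)
  also have "\<dots> \<le> (x + 1) ^ 3"
    using x by (simp add: power2_eq_square eval_nat_numeral algebra_simps)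
  also have "\<dots> = (sqrt (x + 1) ^ 2) ^ 3"
    using x by simp
  also have "\<dots> = (sqrt (x + 1) ^ 3) ^ 2"
    by (simp add: power_mult[symmetric] mult.commute)
  finally have "sqrt x ^ 3 + 3/2 * sqrt x \<le> sqrt (x + 1) ^ 3"
    by (rule power2_le_imp_le) (use x in simp)
  then show ?case
    by (simp add: numeral_3_eq_3)
next
  case (step n)
  define s where "s = sqrt x"
  have x_eq: "x = s ^ 2"
    using x by (simp add: s_def)
  have "(s ^ (n + 2) + real (n + 2) / 2 * s ^ n) * (x + 1)
      = s ^ (n + 2 + 2) + real (n + 2 + 2) / 2 * s ^ (n + 2) + real (n + 2) / 2 * s ^ n"
    unfolding x_eq by (simp add: power_add eval_nat_numeral field_simps)
  moreover have "0 \<le> real (n + 2) / 2 * s ^ n"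
    using x by (simp add: s_def)
  ultimately have "s ^ (n + 2 + 2) + real (n + 2 + 2) / 2 * s ^ (n + 2)
      \<le> (s ^ (n + 2) + real (n + 2) / 2 * s ^ n) * (x + 1)"
    by linarith
  also have "\<dots> \<le> sqrt (x + 1) ^ (n + 2) * (x + 1)"
    using step x by (intro mult_right_mono) (auto simp: s_def)
  also have "\<dots> = sqrt (x + 1) ^ (n + 2) * sqrt (x + 1) ^ 2"
    using x by simp
  also have "\<dots> = sqrt (x + 1) ^ (n + 2 + 2)"
    by (simp add: power_add eval_nat_numeral)
  finally show ?case
    by (simp only: s_def)
qed

lemma binomial_sum_centered_split:
  fixes x e :: "nat \<Rightarrow> real"
  assumes x0: "x 0 = 1" and x1: "x 1 = 0"
  shows "(\<Sum>k\<le>n. real (n choose k) * x k * e (n - k)) = e n + (\<Sum>k=2..n. real (n choose k) * x k * e (n - k))"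
proof -
  define g where "g k = real (n choose k) * x k * e (n - k)" for k
  have "(\<Sum>k\<le>n. g k) = g 0 + (\<Sum>k=1..n. g k)"
    by (simp add: atMost_atLeast0 sum.atLeast_Suc_atMost)
  also have "(\<Sum>k=1..n. g k) = (\<Sum>k=2..n. g k)"
  proof (rule sum.mono_neutral_right)
    show "\<forall>k\<in>{1..n} - {2..n}. g k = 0"
    proof
      fix k
      assume "k \<in> {1..n} - {2..n}"
      then have "k = 1"
        by auto
      then show "g k = 0"
        unfolding g_def using x1 by simp
    qed
  qed auto
  finally show ?thesis
    by (simp add: g_def x0)
qed

text \<open>Induction step for moments of independent sums: \<open>x\<close> and \<open>e\<close> are the moment sequences of a
  centred summand and of the sum of \<open>l\<close> earlier summands.\<close>

lemma binomial_convolution_bound: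
  fixes x e f a :: "nat \<Rightarrow> real" and l :: real
  assumes x0: "x 0 = 1" and x1: "x 1 = 0" and x: "\<And>k. 2 \<le> k \<Longrightarrow> \<bar>x k\<bar> \<le> a k"
    and e: "\<And>j. \<bar>e j\<bar> \<le> f j * sqrt l ^ j" and l: "1 \<le> l" and f_nonneg: "\<And>n. 0 \<le> f n"
    and recursion: "\<And>n. 2 \<le> n \<Longrightarrow> (\<Sum>k=2..n. real (n choose k) * f (n - k) * a k) \<le> real n / 2 * f n"
  shows "\<bar>\<Sum>k\<le>n. real (n choose k) * x k * e (n - k)\<bar> \<le> f n * sqrt (l + 1) ^ n"
proof -
  define g where "g k = real (n choose k) * x k * e (n - k)" for k
  have split: "(\<Sum>k\<le>n. g k) = e n + (\<Sum>k=2..n. g k)"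
    unfolding g_def by (rule binomial_sum_centered_split[OF x0 x1])
  have s: "1 \<le> sqrt l"
    using l by simp
  have "f n * sqrt l ^ n \<le> f n * sqrt (l + 1) ^ n"
    using f_nonneg[of n] l by (intro mult_left_mono power_mono) auto
  with e[of n] have e_n: "\<bar>e n\<bar> \<le> f n * sqrt (l + 1) ^ n"
    by linarith
  show ?thesis
  proof (cases "n < 2")
    case True
    then show ?thesis
      using split e_n by (simp add: g_def)
  next
    case False
    then obtain j where n: "n = j + 2"
      by (metis add.commute le_Suc_ex not_less)
    have "\<bar>g k\<bar> \<le> real (n choose k) * f (n - k) * a k * sqrt l ^ j" if k: "k \<in> {2..n}" for k
    proof -
      have "\<bar>g k\<bar> = real (n choose k) * (\<bar>x k\<bar> * \<bar>e (n - k)\<bar>)"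
        by (simp add: g_def abs_mult)
      also have "\<dots> \<le> real (n choose k) * (a k * (f (n - k) * sqrt l ^ (n - k)))"
        using x[of k] e[of "n - k"] k by (intro mult_left_mono mult_mono) auto
      also have "\<dots> \<le> real (n choose k) * (a k * (f (n - k) * sqrt l ^ j))"
        using k n s x[of k] f_nonneg[of "n - k"]
        by (intro mult_left_mono power_increasing) (auto intro: order_trans[OF abs_ge_zero])
      finally show ?thesis
        by (simp add: algebra_simps)
    qed
    then have "(\<Sum>k=2..n. \<bar>g k\<bar>) \<le> (\<Sum>k=2..n. real (n choose k) * f (n - k) * a k) * sqrt l ^ j"
      unfolding sum_distrib_right by (rule sum_mono)
    also have "\<dots> \<le> real n / 2 * f n * sqrt l ^ j"
      using recursion[of n] False s by (intro mult_right_mono) auto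
    finally have tail: "(\<Sum>k=2..n. \<bar>g k\<bar>) \<le> real n / 2 * f n * sqrt l ^ j" .
    have "\<bar>\<Sum>k\<le>n. g k\<bar> \<le> \<bar>e n\<bar> + (\<Sum>k=2..n. \<bar>g k\<bar>)"
      using split abs_triangle_ineq[of "e n" "sum g {2..n}"] sum_abs[of g "{2..n}"] by linarith
    also have "\<dots> \<le> f n * (sqrt l ^ n + real n / 2 * sqrt l ^ j)"
      using e[of n] tail by (simp add: algebra_simps)
    also have "\<dots> \<le> f n * sqrt (l + 1) ^ n"
      using sqrt_succ_power_ge[of l j] l n f_nonneg[of n] by (intro mult_left_mono) auto
    finally show ?thesis
      by (simp add: g_def)
  qed
qed

lemma binomial_term_le_power:
  assumes "k \<le> n"
  shows "real (n choose k) * real k ^ k * real (n - k) ^ (n - k) \<le> real n ^ n"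
proof -
  have "real (n choose k) * real k ^ k * real (n - k) ^ (n - k)
      \<le> (\<Sum>i\<le>n. real (n choose i) * real k ^ i * real (n - k) ^ (n - i))"
    by (rule member_le_sum[where f = "\<lambda>i. real (n choose i) * real k ^ i * real (n - k) ^ (n - i)"])
       (use assms in auto)
  also have "\<dots> = (real k + real (n - k)) ^ n"
    by (rule binomial_ring[symmetric])
  finally show ?thesis
    using assms by simp
qed

lemma sum_half_powers_le: "(\<Sum>k=2..n. (1/2::real) ^ k) \<le> 1/2"
proof (cases "n = 0")
  case False
  have "(\<Sum>k=2..n. (1/2::real) ^ k) + (1/2) ^ n \<le> 1/2" if "1 \<le> n"
    using that
  proof (induction n rule: dec_induct)
    case (step n)
    then have "(\<Sum>k=2..Suc n. (1/2::real) ^ k) = (\<Sum>k=2..n. (1/2) ^ k) + (1/2) ^ Suc n"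
      by simp
    with step.IH show ?case
      by simp
  qed simp
  moreover have "1 \<le> n" "(0::real) \<le> (1/2) ^ n"
    using False by simp_all
  ultimately show ?thesis
    by linarith
qed simp

lemma binomial_moment_term_le:
  fixes T :: real
  assumes T: "0 \<le> T" and k: "k \<le> n"
  shows "real (n choose k) * (2 * real (n - k) ^ 2 * T) ^ (n - k) * (2 * real k ^ (2 * k) * T ^ k)
    \<le> (1/2) ^ k * (2 * 2 ^ n * (real n ^ n * real n ^ n) * T ^ n)"
proof -
  define b where "b = real (n choose k) * real k ^ k * real (n - k) ^ (n - k)"
  define p where "p = real k ^ k * real (n - k) ^ (n - k)"
  have b: "b \<le> real n ^ n"
    unfolding b_def by (rule binomial_term_le_power[OF k])
  have "p \<le> real n ^ k * real n ^ (n - k)"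
    unfolding p_def by (intro mult_mono power_mono zero_le_power) (use k in simp_all)
  also have "\<dots> = real n ^ n"
    using k by (simp add: power_add[symmetric])
  finally have p: "p \<le> real n ^ n" .
  have "(2 * real (n - k) ^ 2 * T) ^ (n - k)
      = 2 ^ (n - k) * (real (n - k) ^ (n - k) * real (n - k) ^ (n - k)) * T ^ (n - k)"
    by (simp add: power_mult_distrib power2_eq_square)
  moreover have "real k ^ (2 * k) = real k ^ k * real k ^ k"
    by (simp add: mult_2 power_add)
  moreover have "T ^ (n - k) * T ^ k = T ^ n"
    using k by (simp add: power_add[symmetric])
  ultimately have "real (n choose k) * (2 * real (n - k) ^ 2 * T) ^ (n - k) * (2 * real k ^ (2 * k) * T ^ k)
      = 2 * 2 ^ (n - k) * b * p * T ^ n"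
    unfolding b_def p_def by (simp add: ac_simps)
  also have "\<dots> \<le> 2 * 2 ^ (n - k) * real n ^ n * real n ^ n * T ^ n"
    using b p T by (intro mult_right_mono mult_mono mult_left_mono) (simp_all add: p_def)
  also have "(2::real) ^ (n - k) = 2 ^ n * (1/2) ^ k"
    using k by (simp add: power_diff power_one_over)
  finally show ?thesis
    by (simp add: ac_simps)
qed

lemma binomial_moment_recursion:
  fixes T :: real
  assumes T: "0 \<le> T" and n: "2 \<le> n"
  shows "(\<Sum>k=2..n. real (n choose k) * (2 * real (n - k) ^ 2 * T) ^ (n - k) * (2 * real k ^ (2 * k) * T ^ k))
     \<le> real n / 2 * (2 * real n ^ 2 * T) ^ n"
proof -
  define C where "C = 2 * 2 ^ n * (real n ^ n * real n ^ n) * T ^ n"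
  have "(\<Sum>k=2..n. real (n choose k) * (2 * real (n - k) ^ 2 * T) ^ (n - k) * (2 * real k ^ (2 * k) * T ^ k))
      \<le> (\<Sum>k=2..n. (1/2) ^ k) * C"
    unfolding sum_distrib_right C_def by (intro sum_mono binomial_moment_term_le T) simp
  also have "\<dots> \<le> 1/2 * C"
    by (intro mult_right_mono sum_half_powers_le) (use T in \<open>simp add: C_def\<close>)
  also have "\<dots> = (2 * real n ^ 2 * T) ^ n"
    by (simp add: C_def power_mult_distrib power2_eq_square)
  also have "\<dots> \<le> real n / 2 * (2 * real n ^ 2 * T) ^ n"
  proof -
    have "1 \<le> real n / 2"
      using n by simp
    from mult_right_mono[OF this, of "(2 * real n ^ 2 * T) ^ n"] show ?thesis
      using T by simp
  qed
  finally show ?thesis .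
qed

lemma eight_le_golden_constant: "8 \<le> 4 * sqrt 2 * ((1 + sqrt 5) / 2)"
proof -
  have "1.4 \<le> sqrt (2::real)" "2.2 \<le> sqrt (5::real)"
    by (rule real_le_rsqrt, simp add: power2_eq_square)+
  then have "4 * 1.4 * ((1 + 2.2) / 2) \<le> 4 * sqrt 2 * ((1 + sqrt 5) / 2)"
    by (intro mult_mono) auto
  then show ?thesis
    by simp
qed

lemma convex_on_nonneg_power: "convex_on {0::real..} (\<lambda>x. x ^ k)"
proof (cases "even k")
  case True
  then show ?thesis
    using convex_on_subset[OF convex_power_even[OF True]] by auto
next
  case False
  then show ?thesis
    by (rule convex_power_odd)
qed

lemma power_sum_le_weighted_sum:
  fixes p y :: "'i \<Rightarrow> real"
  assumes J: "finite J" "J \<noteq> {}" and p: "\<And>j. j \<in> J \<Longrightarrow> 0 < p j" and p_sum: "(\<Sum>j\<in>J. p j) = 1"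
    and y: "\<And>j. j \<in> J \<Longrightarrow> 0 \<le> y j"
  shows "(\<Sum>j\<in>J. y j) ^ k \<le> (\<Sum>j\<in>J. p j / p j ^ k * y j ^ k)"
proof -
  have "(\<Sum>j\<in>J. y j) = (\<Sum>j\<in>J. p j *\<^sub>R (y j / p j))"
    by (rule sum.cong) (use p in \<open>force simp: field_simps\<close>)+
  also have "\<dots> ^ k \<le> (\<Sum>j\<in>J. p j * (y j / p j) ^ k)"
    by (rule convex_on_sum[OF J convex_on_nonneg_power p_sum])
       (use p y in \<open>auto intro: less_imp_le divide_nonneg_pos\<close>)
  also have "\<dots> = (\<Sum>j\<in>J. p j / p j ^ k * y j ^ k)"
    by (simp add: power_divide)
  finally show ?thesis .
qed

section \<open>Positive semidefinite matrices\<close>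

lemma matrix_entry_eq_form:
  fixes S :: "real^'n^'n"
  shows "axis a 1 \<bullet> (S *v axis b 1) = S $ a $ b"
  by (simp add: matrix_vector_mult_basis column_def inner_axis')

lemma symmetric_matrix_form_commute:
  fixes S :: "real^'n^'n"
  assumes "transpose S = S"
  shows "u \<bullet> (S *v v) = v \<bullet> (S *v u)"
proof -
  have "u \<bullet> (S *v v) = (transpose S *v u) \<bullet> v"
    by (simp add: dot_lmul_matrix)
  then show ?thesis
    using assms by (simp add: inner_commute)
qed

lemma psd_form_Cauchy_Schwarz:
  fixes S :: "real^'n^'n"
  assumes sym: "transpose S = S" and psd: "\<forall>v. 0 \<le> v \<bullet> (S *v v)"
  shows "(u \<bullet> (S *v v))\<^sup>2 \<le> (u \<bullet> (S *v u)) * (v \<bullet> (S *v v))"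
proof -
  define a b c where "a = v \<bullet> (S *v v)" and "b = u \<bullet> (S *v v)" and "c = u \<bullet> (S *v u)"
  have quadratic: "0 \<le> c + 2 * t * b + t\<^sup>2 * a" for t
  proof -
    have "(u + t *\<^sub>R v) \<bullet> (S *v (u + t *\<^sub>R v)) = c + 2 * t * b + t\<^sup>2 * a"
      using symmetric_matrix_form_commute[OF sym, of v u]
      by (simp add: a_def b_def c_def power2_eq_square algebra_simps)
    then show ?thesis
      using psd by metis
  qed
  show ?thesis
  proof (cases "a = 0")
    case True
    have "b = 0"
    proof (rule ccontr)
      assume "b \<noteq> 0"
      with quadratic[of "- (c + 1) / (2 * b)"] True show False
        by (simp add: field_simps)
    qed
    then show ?thesis
      using True by (simp add: a_def b_def)
  next
    case False
    then have a: "0 < a"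
      using psd by (simp add: a_def order_less_le)
    from quadratic[of "- b / a"] a have "b\<^sup>2 / a \<le> c"
      by (simp add: field_simps power2_eq_square)
    then show ?thesis
      using a by (simp add: a_def b_def c_def pos_divide_le_eq)
  qed
qed

lemma psd_diagonal_zero_imp_entry_zero:
  fixes S :: "real^'n^'n"
  assumes sym: "transpose S = S" and psd: "\<forall>v. 0 \<le> v \<bullet> (S *v v)" and "S $ b $ b = 0"
  shows "S $ a $ b = 0"
  using psd_form_Cauchy_Schwarz[OF sym psd, of "axis a 1" "axis b 1"] assms(3)
  by (simp add: matrix_entry_eq_form)

lemma psd_rank_one_reduction_diagonal:
  fixes S :: "real^'n^'n"
  assumes sym: "transpose S = S" and psd: "\<forall>v. 0 \<le> v \<bullet> (S *v v)" and pos: "0 < S $ i $ i"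
  shows "card {a. S $ a $ a - S $ a $ i * S $ a $ i / S $ i $ i \<noteq> 0} < card {a. S $ a $ a \<noteq> 0}"
proof -
  have "{a. S $ a $ a - S $ a $ i * S $ a $ i / S $ i $ i \<noteq> 0} \<subseteq> {a. S $ a $ a \<noteq> 0} - {i}"
  proof
    fix a
    assume a: "a \<in> {a. S $ a $ a - S $ a $ i * S $ a $ i / S $ i $ i \<noteq> 0}"
    then have "a \<noteq> i"
      using pos by auto
    moreover have "S $ a $ a \<noteq> 0"
    proof
      assume "S $ a $ a = 0"
      then have "S $ i $ a = 0"
        by (rule psd_diagonal_zero_imp_entry_zero[OF sym psd])
      moreover have "S $ a $ i = S $ i $ a"
        using arg_cong[OF sym, of "\<lambda>A. A $ a $ i"] by (simp add: transpose_def)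
      ultimately show False
        using a \<open>S $ a $ a = 0\<close> by simp
    qed
    ultimately show "a \<in> {a. S $ a $ a \<noteq> 0} - {i}"
      by simp
  qed
  then have "card {a. S $ a $ a - S $ a $ i * S $ a $ i / S $ i $ i \<noteq> 0} \<le> card ({a. S $ a $ a \<noteq> 0} - {i})"
    by (rule card_mono[rotated]) simp
  also have "\<dots> < card {a. S $ a $ a \<noteq> 0}"
    using pos by (intro card_Diff1_less) simp_all
  finally show ?thesis .
qed

text \<open>Subtracting \<open>c c\<^sup>T\<close>, where \<open>c\<close> is column \<open>i\<close> divided by \<open>\<surd>S\<^sub>i\<^sub>i\<close>, preserves positivity
  by Cauchy--Schwarz and clears row and column \<open>i\<close>.\<close>

lemma psd_rank_one_reduction:
  fixes S :: "real^'n^'n"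
  assumes sym: "transpose S = S" and psd: "\<forall>v. 0 \<le> v \<bullet> (S *v v)" and i: "S $ i $ i \<noteq> 0"
  obtains u S' where "u \<noteq> 0" and "transpose S' = S'" and "\<forall>x. 0 \<le> x \<bullet> (S' *v x)"
    and "\<And>x y. x \<bullet> (S *v y) = x \<bullet> (S' *v y) + (x \<bullet> u) * (y \<bullet> u)"
    and "card {a. S' $ a $ a \<noteq> 0} < card {a. S $ a $ a \<noteq> 0}"
proof -
  have "0 \<le> S $ i $ i"
    using psd matrix_entry_eq_form[of i S i] by metis
  with i have pos: "0 < S $ i $ i"
    by simp
  have S_sym: "S $ a $ b = S $ b $ a" for a b
    using arg_cong[OF sym, of "\<lambda>A. A $ b $ a"] by (simp add: transpose_def)
  define c where "c = (1 / sqrt (S $ i $ i)) *\<^sub>R column i S"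
  define R where "R = S - (\<chi> a b. c $ a * c $ b)"
  have R_entry: "R $ a $ b = S $ a $ b - S $ a $ i * S $ b $ i / S $ i $ i" for a b
    using pos by (simp add: R_def c_def column_def)
  have "(\<chi> a b. c $ a * c $ b) *v y = (c \<bullet> y) *\<^sub>R c" for y
    by (simp add: vec_eq_iff matrix_vector_mult_def inner_vec_def sum_distrib_left mult_ac)
  then have form: "x \<bullet> (S *v y) = x \<bullet> (R *v y) + (x \<bullet> c) * (y \<bullet> c)" for x y
    by (simp add: R_def matrix_vector_mult_diff_rdistrib inner_diff_right inner_commute)
  have "R $ a $ b = R $ b $ a" for a b
    unfolding R_entry using S_sym[of a b] by (simp add: mult.commute)
  then have R_sym: "transpose R = R"
    by (simp add: vec_eq_iff transpose_def)
  have R_psd: "\<forall>x. 0 \<le> x \<bullet> (R *v x)"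
  proof
    fix x
    have "x \<bullet> c = (x \<bullet> (S *v axis i 1)) / sqrt (S $ i $ i)"
      by (simp add: c_def matrix_vector_mult_basis)
    then have "(x \<bullet> c)\<^sup>2 = (x \<bullet> (S *v axis i 1))\<^sup>2 / S $ i $ i"
      using pos by (simp add: power_divide)
    also have "\<dots> \<le> x \<bullet> (S *v x)"
      using psd_form_Cauchy_Schwarz[OF sym psd, of x "axis i 1"] pos
      by (simp add: matrix_entry_eq_form pos_divide_le_eq)
    finally show "0 \<le> x \<bullet> (R *v x)"
      using form[of x x] by (simp add: power2_eq_square)
  qed
  have R_card: "card {a. R $ a $ a \<noteq> 0} < card {a. S $ a $ a \<noteq> 0}"
    using psd_rank_one_reduction_diagonal[OF sym psd pos] by (simp add: R_entry)
  have "c $ i \<noteq> 0"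
    using pos by (simp add: c_def column_def)
  then have "c \<noteq> 0"
    by auto
  then show ?thesis
    by (rule that[OF _ R_sym R_psd form R_card])
qed

lemma psd_gram_decomposition:
  fixes S :: "real^'n^'n"
  assumes "transpose S = S" and "\<forall>v. 0 \<le> v \<bullet> (S *v v)"
  obtains N and w :: "nat \<Rightarrow> real^'n"
  where "\<forall>j<N. w j \<noteq> 0" and "\<And>u v. u \<bullet> (S *v v) = (\<Sum>j<N. (u \<bullet> w j) * (v \<bullet> w j))"
proof -
  have "\<exists>(N::nat) (w::nat \<Rightarrow> real^'n).
      (\<forall>j<N. w j \<noteq> 0) \<and> (\<forall>u v. u \<bullet> (S *v v) = (\<Sum>j<N. (u \<bullet> w j) * (v \<bullet> w j)))"
    if "transpose S = S" "\<forall>v. 0 \<le> v \<bullet> (S *v v)" for S :: "real^'n^'n"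
    using that
  proof (induction "card {a. S $ a $ a \<noteq> 0}" arbitrary: S rule: less_induct)
    case less
    show ?case
    proof (cases "\<exists>i. S $ i $ i \<noteq> 0")
      case False
      then have "S $ a $ b = 0" for a b
        using less.prems by (blast intro: psd_diagonal_zero_imp_entry_zero)
      then have "S = 0"
        by (simp add: vec_eq_iff)
      show ?thesis
        by (rule exI[where x = 0]) (simp add: \<open>S = 0\<close>)
    next
      case True
      then obtain i where "S $ i $ i \<noteq> 0"
        by blast
      obtain u S' where
        u: "u \<noteq> 0" and S': "transpose S' = S'" "\<forall>x. 0 \<le> x \<bullet> (S' *v x)"
        and form: "\<And>x y. x \<bullet> (S *v y) = x \<bullet> (S' *v y) + (x \<bullet> u) * (y \<bullet> u)"
        and card: "card {a. S' $ a $ a \<noteq> 0} < card {a. S $ a $ a \<noteq> 0}"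
        using psd_rank_one_reduction[OF less.prems \<open>S $ i $ i \<noteq> 0\<close>] by blast
      obtain N :: nat and w :: "nat \<Rightarrow> real^'n" where w: "\<forall>j<N. w j \<noteq> 0"
        and gram: "\<forall>x y. x \<bullet> (S' *v y) = (\<Sum>j<N. (x \<bullet> w j) * (y \<bullet> w j))"
        using less.hyps[OF card S'] by blast
      have "(\<Sum>j<N. (x \<bullet> (w(N := u)) j) * (y \<bullet> (w(N := u)) j)) = (\<Sum>j<N. (x \<bullet> w j) * (y \<bullet> w j))" for x y
        by (rule sum.cong) auto
      then have "\<forall>x y. x \<bullet> (S *v y) = (\<Sum>j<Suc N. (x \<bullet> (w(N := u)) j) * (y \<bullet> (w(N := u)) j))"
        using gram form by simp
      moreover have "\<forall>j<Suc N. (w(N := u)) j \<noteq> 0"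
        using w u by simp
      ultimately show ?thesis
        by blast
    qed
  qed
  with assms that show ?thesis
    by blast
qed

lemma trace_square_gram:
  fixes S :: "real^'n^'n" and w :: "nat \<Rightarrow> real^'n"
  assumes gram: "\<And>u v. u \<bullet> (S *v v) = (\<Sum>j<N. (u \<bullet> w j) * (v \<bullet> w j))"
  shows "trace (S ** S) = (\<Sum>j<N. w j \<bullet> (S *v w j))"
proof -
  have entry: "(\<Sum>j<N. w j $ a * w j $ b) = S $ a $ b" for a b
    using gram[of "axis a 1" "axis b 1"] by (simp add: matrix_entry_eq_form[symmetric] inner_axis')
  have "(\<Sum>j<N. w j \<bullet> (S *v w j)) = (\<Sum>j<N. \<Sum>b\<in>UNIV. \<Sum>a\<in>UNIV. S $ b $ a * (w j $ a * w j $ b))"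
    by (simp add: inner_vec_def matrix_vector_mult_def sum_distrib_left mult_ac)
  also have "\<dots> = (\<Sum>b\<in>UNIV. \<Sum>j<N. \<Sum>a\<in>UNIV. S $ b $ a * (w j $ a * w j $ b))"
    by (rule sum.swap)
  also have "\<dots> = (\<Sum>b\<in>UNIV. \<Sum>a\<in>UNIV. \<Sum>j<N. S $ b $ a * (w j $ a * w j $ b))"
    by (rule sum.cong[OF refl], rule sum.swap)
  also have "\<dots> = trace (S ** S)"
    by (simp add: trace_def matrix_matrix_mult_def entry flip: sum_distrib_left)
  finally show ?thesis ..
qed

lemma gram_form_pos:
  fixes S :: "real^'n^'n" and w :: "nat \<Rightarrow> real^'n"
  assumes gram: "\<And>u v. u \<bullet> (S *v v) = (\<Sum>j<N. (u \<bullet> w j) * (v \<bullet> w j))"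
    and "j < N" and "w j \<noteq> 0"
  shows "0 < w j \<bullet> (S *v w j)"
proof -
  have "0 < (w j \<bullet> w j)\<^sup>2"
    using assms(3) by simp
  also have "\<dots> \<le> (\<Sum>l<N. (w j \<bullet> w l)\<^sup>2)"
    by (rule member_le_sum[where f = "\<lambda>l. (w j \<bullet> w l)\<^sup>2"]) (use assms(2) in auto)
  also have "\<dots> = w j \<bullet> (S *v w j)"
    by (simp add: gram power2_eq_square inner_commute)
  finally show ?thesis .
qed

lemma trace_square_nonneg:
  fixes S :: "real^'n^'n"
  assumes "transpose S = S"
  shows "0 \<le> trace (S ** S)"
proof -
  have "S $ b $ a = S $ a $ b" for a b
    using arg_cong[OF assms, of "\<lambda>A. A $ a $ b"] by (simp add: transpose_def)
  then show ?thesis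
    unfolding trace_def matrix_matrix_mult_def by (simp add: sum_nonneg)
qed

section \<open>Moments of Gaussian inner products\<close>

lemma nn_integral_normal_even_moment:
  assumes \<sigma>: "0 < \<sigma>"
  shows "(\<integral>\<^sup>+x. ennreal (normal_density 0 \<sigma> x) * ennreal (x ^ (2 * k)) \<partial>lborel)
    = ennreal (gauss_moment k * (\<sigma>\<^sup>2) ^ k)"
proof -
  have moment: "has_bochner_integral lborel (\<lambda>x. normal_density 0 \<sigma> x * (x - 0) ^ (2 * k))
      (fact (2 * k) / ((2 / \<sigma>\<^sup>2) ^ k * fact k))"
    by (rule normal_moment_even[OF \<sigma>])
  have "(\<integral>\<^sup>+x. ennreal (normal_density 0 \<sigma> x) * ennreal (x ^ (2 * k)) \<partial>lborel)
      = (\<integral>\<^sup>+x. ennreal (normal_density 0 \<sigma> x * (x - 0) ^ (2 * k)) \<partial>lborel)"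
    by (rule nn_integral_cong) (simp add: ennreal_mult'[symmetric] zero_le_even_power)
  also have "\<dots> = ennreal (\<integral>x. normal_density 0 \<sigma> x * (x - 0) ^ (2 * k) \<partial>lborel)"
    by (rule nn_integral_eq_integral) (use moment in \<open>auto simp: has_bochner_integral_iff zero_le_even_power\<close>)
  also have "\<dots> = ennreal (fact (2 * k) / ((2 / \<sigma>\<^sup>2) ^ k * fact k))"
    using has_bochner_integral_integral_eq[OF moment] by simp
  also have "fact (2 * k) / ((2 / \<sigma>\<^sup>2) ^ k * fact k) = gauss_moment k * (\<sigma>\<^sup>2) ^ k"
    using \<sigma> by (simp add: gauss_moment_def power_divide field_simps)
  finally show ?thesis .
qed

text \<open>A Minkowski-type bound, proved by Jensen's inequality with weights \<open>\<sigma> j / (\<Sum>j\<in>J. \<sigma> j)\<close>.\<close>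

lemma nn_integral_power_sum_le:
  fixes \<xi> :: "'i \<Rightarrow> 'a \<Rightarrow> real" and \<sigma> :: "'i \<Rightarrow> real"
  assumes J: "finite J" "J \<noteq> {}"
    and meas: "\<And>j. j \<in> J \<Longrightarrow> \<xi> j \<in> borel_measurable M"
    and nonneg: "\<And>j \<omega>. j \<in> J \<Longrightarrow> 0 \<le> \<xi> j \<omega>"
    and pos: "\<And>j. j \<in> J \<Longrightarrow> 0 < \<sigma> j" and c: "0 \<le> c"
    and moment: "\<And>j. j \<in> J \<Longrightarrow> (\<integral>\<^sup>+\<omega>. ennreal (\<xi> j \<omega> ^ k) \<partial>M) = ennreal (c * \<sigma> j ^ k)"
  shows "(\<integral>\<^sup>+\<omega>. ennreal ((\<Sum>j\<in>J. \<xi> j \<omega>) ^ k) \<partial>M) \<le> ennreal (c * (\<Sum>j\<in>J. \<sigma> j) ^ k)"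
proof -
  define T where "T = (\<Sum>j\<in>J. \<sigma> j)"
  define p where "p j = \<sigma> j / T" for j
  have T: "0 < T"
    unfolding T_def using J pos by (intro sum_pos) auto
  have p: "0 < p j" if "j \<in> J" for j
    using pos[OF that] T by (simp add: p_def)
  have p_sum: "(\<Sum>j\<in>J. p j) = 1"
    using T by (simp add: p_def T_def flip: sum_divide_distrib)
  have weight: "ennreal (p j / p j ^ k) * ennreal (c * \<sigma> j ^ k) = ennreal (c * T ^ k * p j)" if "j \<in> J" for j
  proof -
    have "p j / p j ^ k * (c * \<sigma> j ^ k) = c * T ^ k * p j"
      using p[OF that] T by (simp add: p_def power_divide field_simps)
    then show ?thesis
      using p[OF that] pos[OF that] c by (simp flip: ennreal_mult)
  qed
  have "(\<integral>\<^sup>+\<omega>. ennreal ((\<Sum>j\<in>J. \<xi> j \<omega>) ^ k) \<partial>M)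
      \<le> (\<integral>\<^sup>+\<omega>. (\<Sum>j\<in>J. ennreal (p j / p j ^ k) * ennreal (\<xi> j \<omega> ^ k)) \<partial>M)"
  proof (rule nn_integral_mono)
    fix \<omega>
    have "(\<Sum>j\<in>J. \<xi> j \<omega>) ^ k \<le> (\<Sum>j\<in>J. p j / p j ^ k * \<xi> j \<omega> ^ k)"
      by (rule power_sum_le_weighted_sum[OF J p p_sum nonneg])
    then have "ennreal ((\<Sum>j\<in>J. \<xi> j \<omega>) ^ k) \<le> ennreal (\<Sum>j\<in>J. p j / p j ^ k * \<xi> j \<omega> ^ k)"
      by (rule ennreal_leI)
    also have "\<dots> = (\<Sum>j\<in>J. ennreal (p j / p j ^ k * \<xi> j \<omega> ^ k))"
      using p nonneg by (intro sum_ennreal[symmetric]) (simp add: less_imp_le)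
    also have "\<dots> = (\<Sum>j\<in>J. ennreal (p j / p j ^ k) * ennreal (\<xi> j \<omega> ^ k))"
      using p nonneg by (intro sum.cong refl ennreal_mult) (auto intro: less_imp_le)
    finally show "ennreal ((\<Sum>j\<in>J. \<xi> j \<omega>) ^ k) \<le> (\<Sum>j\<in>J. ennreal (p j / p j ^ k) * ennreal (\<xi> j \<omega> ^ k))" .
  qed
  also have "\<dots> = (\<Sum>j\<in>J. ennreal (p j / p j ^ k) * (\<integral>\<^sup>+\<omega>. ennreal (\<xi> j \<omega> ^ k) \<partial>M))"
    using meas by (simp add: nn_integral_sum nn_integral_cmult)
  also have "\<dots> = (\<Sum>j\<in>J. ennreal (c * T ^ k * p j))"
    by (rule sum.cong) (simp_all add: moment weight)
  also have "\<dots> = ennreal (\<Sum>j\<in>J. c * T ^ k * p j)"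
    using p c T by (intro sum_ennreal) (simp add: less_imp_le)
  also have "\<dots> = ennreal (c * T ^ k)"
    by (simp add: p_sum flip: sum_distrib_left)
  finally show ?thesis
    by (simp add: T_def)
qed

context prob_space
begin

lemma centered_gaussian_vector_measurable:
  "centered_gaussian_vector M X S \<Longrightarrow> X \<in> borel_measurable M"
  by (simp add: centered_gaussian_vector_def)

lemma centered_gaussian_vector_inner_distributed:
  assumes X: "centered_gaussian_vector M X S" and pos: "0 < v \<bullet> (S *v v)"
  shows "distributed M lborel (\<lambda>\<omega>. v \<bullet> X \<omega>) (normal_density 0 (sqrt (v \<bullet> (S *v v))))"
proof -
  have [measurable]: "X \<in> borel_measurable M"
    using X by (rule centered_gaussian_vector_measurable)
  have "distr M lborel (\<lambda>\<omega>. v \<bullet> X \<omega>) = distr M borel (\<lambda>\<omega>. v \<bullet> X \<omega>)"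
    by (rule distr_cong) auto
  also have "\<dots> = density lborel (normal_density 0 (sqrt (v \<bullet> (S *v v))))"
    using X pos unfolding centered_gaussian_vector_def Let_def by auto
  finally show ?thesis
    unfolding distributed_def by simp
qed

lemma centered_gaussian_vector_inner_AE_zero:
  assumes X: "centered_gaussian_vector M X S" and "v \<bullet> (S *v v) = 0"
  shows "AE \<omega> in M. v \<bullet> X \<omega> = 0"
proof -
  have [measurable]: "X \<in> borel_measurable M"
    using X by (rule centered_gaussian_vector_measurable)
  have distr: "distr M borel (\<lambda>\<omega>. v \<bullet> X \<omega>) = return borel 0"
    using assms unfolding centered_gaussian_vector_def Let_def by auto
  have "AE x in distr M borel (\<lambda>\<omega>. v \<bullet> X \<omega>). x = 0"
    unfolding distr by (subst AE_return) auto
  then show ?thesis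
    by (subst (asm) AE_distr_iff) auto
qed

lemma gaussian_diff_inner_even_moment:
  assumes indep: "indep_var borel X1 borel X2"
    and X1: "centered_gaussian_vector M X1 S" and X2: "centered_gaussian_vector M X2 S"
    and nonneg: "0 \<le> v \<bullet> (S *v v)"
  shows "(\<integral>\<^sup>+\<omega>. ennreal ((v \<bullet> (X1 \<omega> - X2 \<omega>)) ^ (2 * k)) \<partial>M)
    = ennreal (gauss_moment k * (2 * (v \<bullet> (S *v v))) ^ k)"
proof -
  define s where "s = v \<bullet> (S *v v)"
  have [measurable]: "X1 \<in> borel_measurable M" "X2 \<in> borel_measurable M"
    using X1 X2 by (simp_all add: centered_gaussian_vector_measurable)
  have diff: "v \<bullet> (X1 \<omega> - X2 \<omega>) = v \<bullet> X1 \<omega> - v \<bullet> X2 \<omega>" for \<omega>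
    by (simp add: inner_diff_right)
  show ?thesis
  proof (cases "s = 0")
    case True
    have "AE \<omega> in M. v \<bullet> X1 \<omega> = 0" "AE \<omega> in M. v \<bullet> X2 \<omega> = 0"
      using X1 X2 True by (simp_all add: s_def centered_gaussian_vector_inner_AE_zero)
    then have "AE \<omega> in M. ennreal ((v \<bullet> (X1 \<omega> - X2 \<omega>)) ^ (2 * k)) = ennreal (0 ^ (2 * k))"
      by eventually_elim (simp add: diff)
    then have "(\<integral>\<^sup>+\<omega>. ennreal ((v \<bullet> (X1 \<omega> - X2 \<omega>)) ^ (2 * k)) \<partial>M) = (\<integral>\<^sup>+\<omega>. ennreal (0 ^ (2 * k)) \<partial>M)"
      by (rule nn_integral_cong_AE)
    then show ?thesis
      using True by (cases k) (simp_all add: s_def emeasure_space_1)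
  next
    case False
    then have pos: "0 < s"
      using nonneg by (simp add: s_def)
    have "indep_var borel (\<lambda>\<omega>. v \<bullet> X1 \<omega>) borel (\<lambda>\<omega>. v \<bullet> X2 \<omega>)"
      using indep_var_compose[OF indep, of "\<lambda>x. v \<bullet> x" borel "\<lambda>x. v \<bullet> x" borel]
      by (simp add: comp_def)
    then have "distributed M lborel (\<lambda>\<omega>. v \<bullet> X1 \<omega> - v \<bullet> X2 \<omega>)
        (normal_density (0 - 0) (sqrt ((sqrt s)\<^sup>2 + (sqrt s)\<^sup>2)))"
      by (rule diff_indep_normal)
        (use pos X1 X2 in \<open>simp_all add: s_def centered_gaussian_vector_inner_distributed\<close>)
    then have normal: "distributed M lborel (\<lambda>\<omega>. v \<bullet> (X1 \<omega> - X2 \<omega>)) (normal_density 0 (sqrt (2 * s)))"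
      using pos by (simp add: diff)
    have "(\<integral>\<^sup>+\<omega>. ennreal ((v \<bullet> (X1 \<omega> - X2 \<omega>)) ^ (2 * k)) \<partial>M)
        = (\<integral>\<^sup>+x. ennreal (normal_density 0 (sqrt (2 * s)) x) * ennreal (x ^ (2 * k)) \<partial>lborel)"
      by (rule distributed_nn_integral[OF normal, symmetric]) simp
    also have "\<dots> = ennreal (gauss_moment k * (2 * s) ^ k)"
      using pos by (simp add: nn_integral_normal_even_moment)
    finally show ?thesis
      by (simp add: s_def)
  qed
qed

lemma indep_var_nn_integral_iterated:
  fixes A B :: "'a \<Rightarrow> 'b::topological_space"
  assumes indep: "indep_var borel A borel B"
    and f [measurable]: "(\<lambda>(a, b). f a b) \<in> borel_measurable (borel \<Otimes>\<^sub>M borel)"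
  shows "(\<integral>\<^sup>+\<omega>. f (A \<omega>) (B \<omega>) \<partial>M) = (\<integral>\<^sup>+\<omega>. (\<integral>\<^sup>+\<omega>'. f (A \<omega>') (B \<omega>) \<partial>M) \<partial>M)"
proof -
  have [measurable]: "A \<in> borel_measurable M" "B \<in> borel_measurable M"
    using indep by (auto dest: indep_var_rv1 indep_var_rv2)
  interpret PA: prob_space "distr M borel A"
    by (rule prob_space_distr) simp
  interpret PB: prob_space "distr M borel B"
    by (rule prob_space_distr) simp
  interpret PAB: pair_prob_space "distr M borel A" "distr M borel B" ..
  have "(\<integral>\<^sup>+\<omega>. f (A \<omega>) (B \<omega>) \<partial>M)
      = (\<integral>\<^sup>+p. f (fst p) (snd p) \<partial>distr M (borel \<Otimes>\<^sub>M borel) (\<lambda>\<omega>. (A \<omega>, B \<omega>)))"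
    by (subst nn_integral_distr) (auto simp: case_prod_beta')
  also have "\<dots> = (\<integral>\<^sup>+p. f (fst p) (snd p) \<partial>(distr M borel A \<Otimes>\<^sub>M distr M borel B))"
    using indep by (simp add: indep_var_distribution_eq)
  also have "\<dots> = (\<integral>\<^sup>+b. (\<integral>\<^sup>+a. f a b \<partial>distr M borel A) \<partial>distr M borel B)"
    by (subst PAB.nn_integral_snd[symmetric]) (auto simp: case_prod_beta')
  also have "\<dots> = (\<integral>\<^sup>+\<omega>. (\<integral>\<^sup>+\<omega>'. f (A \<omega>') (B \<omega>) \<partial>M) \<partial>M)"
    by (subst nn_integral_distr) (auto simp: nn_integral_distr)
  finally show ?thesis .
qed

lemma gaussian_diff_inner_indep_even_moment:
  fixes X1 X3 B :: "'a \<Rightarrow> real^'d"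
  assumes indep13: "indep_var borel X1 borel X3"
    and indep: "indep_var borel (\<lambda>\<omega>. X1 \<omega> - X3 \<omega>) borel B"
    and X1: "centered_gaussian_vector M X1 S" and X3: "centered_gaussian_vector M X3 S"
    and psd: "\<forall>v. 0 \<le> v \<bullet> (S *v v)"
  shows "(\<integral>\<^sup>+\<omega>. ennreal (((X1 \<omega> - X3 \<omega>) \<bullet> B \<omega>) ^ (2 * k)) \<partial>M)
    = ennreal (gauss_moment k * 2 ^ k) * (\<integral>\<^sup>+\<omega>. ennreal ((B \<omega> \<bullet> (S *v B \<omega>)) ^ k) \<partial>M)"
proof -
  have [measurable]: "B \<in> borel_measurable M"
    using indep by (rule indep_var_rv2)
  have [measurable]: "(\<lambda>x. x \<bullet> (S *v x)) \<in> borel_measurable borel"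
    by (intro borel_measurable_continuous_onI continuous_on_inner continuous_on_id
        matrix_vector_mult_linear_continuous_on)
  have "(\<integral>\<^sup>+\<omega>. ennreal (((X1 \<omega> - X3 \<omega>) \<bullet> B \<omega>) ^ (2 * k)) \<partial>M)
      = (\<integral>\<^sup>+\<omega>. (\<integral>\<^sup>+\<omega>'. ennreal (((X1 \<omega>' - X3 \<omega>') \<bullet> B \<omega>) ^ (2 * k)) \<partial>M) \<partial>M)"
    by (rule indep_var_nn_integral_iterated[OF indep, where f = "\<lambda>a b. ennreal ((a \<bullet> b) ^ (2 * k))"])
      measurable
  also have "\<dots> = (\<integral>\<^sup>+\<omega>. ennreal (gauss_moment k * 2 ^ k) * ennreal ((B \<omega> \<bullet> (S *v B \<omega>)) ^ k) \<partial>M)"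
  proof (rule nn_integral_cong)
    fix \<omega>
    have "(\<integral>\<^sup>+\<omega>'. ennreal (((X1 \<omega>' - X3 \<omega>') \<bullet> B \<omega>) ^ (2 * k)) \<partial>M)
        = ennreal (gauss_moment k * (2 * (B \<omega> \<bullet> (S *v B \<omega>))) ^ k)"
      using gaussian_diff_inner_even_moment[OF indep13 X1 X3, of "B \<omega>" k] psd by (simp add: inner_commute)
    then show "(\<integral>\<^sup>+\<omega>'. ennreal (((X1 \<omega>' - X3 \<omega>') \<bullet> B \<omega>) ^ (2 * k)) \<partial>M)
        = ennreal (gauss_moment k * 2 ^ k) * ennreal ((B \<omega> \<bullet> (S *v B \<omega>)) ^ k)"
      using psd gauss_moment_pos[of k] by (simp add: power_mult_distrib mult.assoc flip: ennreal_mult)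
  qed
  also have "\<dots> = ennreal (gauss_moment k * 2 ^ k) * (\<integral>\<^sup>+\<omega>. ennreal ((B \<omega> \<bullet> (S *v B \<omega>)) ^ k) \<partial>M)"
    by (rule nn_integral_cmult) simp
  finally show ?thesis .
qed

lemma gaussian_diff_quadratic_form_moments:
  fixes X2 X4 :: "'a \<Rightarrow> real^'d"
  assumes indep: "indep_var borel X2 borel X4"
    and X2: "centered_gaussian_vector M X2 S" and X4: "centered_gaussian_vector M X4 S"
    and sym: "transpose S = S" and psd: "\<forall>v. 0 \<le> v \<bullet> (S *v v)"
  shows "(\<integral>\<^sup>+\<omega>. ennreal (((X2 \<omega> - X4 \<omega>) \<bullet> (S *v (X2 \<omega> - X4 \<omega>))) ^ k) \<partial>M)
      \<le> ennreal (gauss_moment k * (2 * trace (S ** S)) ^ k)"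
    and "(\<integral>\<^sup>+\<omega>. ennreal ((X2 \<omega> - X4 \<omega>) \<bullet> (S *v (X2 \<omega> - X4 \<omega>))) \<partial>M) = ennreal (2 * trace (S ** S))"
proof -
  have [measurable]: "X2 \<in> borel_measurable M" "X4 \<in> borel_measurable M"
    using X2 X4 by (simp_all add: centered_gaussian_vector_measurable)
  obtain N and w :: "nat \<Rightarrow> real^'d" where nonzero: "\<forall>j<N. w j \<noteq> 0"
    and gram: "\<And>u v. u \<bullet> (S *v v) = (\<Sum>j<N. (u \<bullet> w j) * (v \<bullet> w j))"
    using psd_gram_decomposition[OF sym psd] by blast
  define \<sigma> where "\<sigma> j = w j \<bullet> (S *v w j)" for j
  define \<xi> where "\<xi> j \<omega> = (w j \<bullet> (X2 \<omega> - X4 \<omega>))\<^sup>2" for j \<omega>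
  have trace: "trace (S ** S) = (\<Sum>j<N. \<sigma> j)"
    unfolding \<sigma>_def by (rule trace_square_gram[OF gram])
  have form: "(X2 \<omega> - X4 \<omega>) \<bullet> (S *v (X2 \<omega> - X4 \<omega>)) = (\<Sum>j<N. \<xi> j \<omega>)" for \<omega>
    by (simp add: gram \<xi>_def power2_eq_square inner_commute)
  have \<xi>_moment: "(\<integral>\<^sup>+\<omega>. ennreal (\<xi> j \<omega> ^ k) \<partial>M) = ennreal (gauss_moment k * 2 ^ k * \<sigma> j ^ k)" for j k
    using gaussian_diff_inner_even_moment[OF indep X2 X4, of "w j" k] psd
    by (simp add: \<xi>_def \<sigma>_def power_mult power_mult_distrib mult.assoc)
  have [measurable]: "\<xi> j \<in> borel_measurable M" for j
    unfolding \<xi>_def by measurable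
  show "(\<integral>\<^sup>+\<omega>. ennreal (((X2 \<omega> - X4 \<omega>) \<bullet> (S *v (X2 \<omega> - X4 \<omega>))) ^ k) \<partial>M)
      \<le> ennreal (gauss_moment k * (2 * trace (S ** S)) ^ k)"
  proof (cases "N = 0")
    case True
    then show ?thesis
      using form trace by (cases k) (simp_all add: emeasure_space_1)
  next
    case False
    have "(\<integral>\<^sup>+\<omega>. ennreal ((\<Sum>j<N. \<xi> j \<omega>) ^ k) \<partial>M) \<le> ennreal (gauss_moment k * 2 ^ k * (\<Sum>j<N. \<sigma> j) ^ k)"
      using False nonzero gauss_moment_pos[of k]
      by (intro nn_integral_power_sum_le \<xi>_moment)
        (auto simp: \<xi>_def \<sigma>_def gram_form_pos[OF gram] less_imp_le)
    then show ?thesis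
      by (simp add: form trace power_mult_distrib mult.assoc)
  qed
  have "(\<integral>\<^sup>+\<omega>. ennreal ((X2 \<omega> - X4 \<omega>) \<bullet> (S *v (X2 \<omega> - X4 \<omega>))) \<partial>M)
      = (\<Sum>j<N. \<integral>\<^sup>+\<omega>. ennreal (\<xi> j \<omega> ^ 1) \<partial>M)"
    by (simp add: form \<xi>_def nn_integral_sum flip: sum_ennreal)
  also have "\<dots> = (\<Sum>j<N. ennreal (2 * \<sigma> j))"
    using \<xi>_moment[of _ 1] by (simp add: gauss_moment_Suc)
  also have "\<dots> = ennreal (2 * trace (S ** S))"
    using psd by (simp add: trace \<sigma>_def sum_nonneg sum_distrib_left flip: sum_ennreal)
  finally show "(\<integral>\<^sup>+\<omega>. ennreal ((X2 \<omega> - X4 \<omega>) \<bullet> (S *v (X2 \<omega> - X4 \<omega>))) \<partial>M) = ennreal (2 * trace (S ** S))" .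
qed

lemma kernel_term_nn_moment_eq:
  fixes X1 X2 X3 X4 :: "'a \<Rightarrow> real^'d"
  assumes indep13: "indep_var borel X1 borel X3"
    and indep: "indep_var borel (\<lambda>\<omega>. X1 \<omega> - X3 \<omega>) borel (\<lambda>\<omega>. X2 \<omega> - X4 \<omega>)"
    and X1: "centered_gaussian_vector M X1 S" and X2: "centered_gaussian_vector M X2 S"
    and X3: "centered_gaussian_vector M X3 S" and X4: "centered_gaussian_vector M X4 S"
    and psd: "\<forall>v. 0 \<le> v \<bullet> (S *v v)"
  shows "(\<integral>\<^sup>+\<omega>. ennreal (((1/4) * ((X1 \<omega> - X3 \<omega>) \<bullet> (X2 \<omega> - X4 \<omega>))\<^sup>2) ^ k) \<partial>M)
    = ennreal ((1/4) ^ k * (gauss_moment k * 2 ^ k))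
      * (\<integral>\<^sup>+\<omega>. ennreal (((X2 \<omega> - X4 \<omega>) \<bullet> (S *v (X2 \<omega> - X4 \<omega>))) ^ k) \<partial>M)"
proof -
  have [measurable]: "X1 \<in> borel_measurable M" "X2 \<in> borel_measurable M"
    "X3 \<in> borel_measurable M" "X4 \<in> borel_measurable M"
    using X1 X2 X3 X4 by (simp_all add: centered_gaussian_vector_measurable)
  have "(\<integral>\<^sup>+\<omega>. ennreal (((1/4) * ((X1 \<omega> - X3 \<omega>) \<bullet> (X2 \<omega> - X4 \<omega>))\<^sup>2) ^ k) \<partial>M)
      = (\<integral>\<^sup>+\<omega>. ennreal ((1/4) ^ k) * ennreal (((X1 \<omega> - X3 \<omega>) \<bullet> (X2 \<omega> - X4 \<omega>)) ^ (2 * k)) \<partial>M)"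
    unfolding power_mult_distrib power_mult
    by (intro nn_integral_cong ennreal_mult) (simp_all add: zero_le_even_power)
  also have "\<dots> = ennreal ((1/4) ^ k) * (\<integral>\<^sup>+\<omega>. ennreal (((X1 \<omega> - X3 \<omega>) \<bullet> (X2 \<omega> - X4 \<omega>)) ^ (2 * k)) \<partial>M)"
    by (rule nn_integral_cmult) simp
  finally show ?thesis
    using gauss_moment_pos[of k]
    by (simp add: gaussian_diff_inner_indep_even_moment[OF indep13 indep X1 X3 psd] ennreal_mult mult.assoc)
qed

lemma kernel_term_nn_moment_le:
  fixes X1 X2 X3 X4 :: "'a \<Rightarrow> real^'d"
  assumes indep13: "indep_var borel X1 borel X3" and indep24: "indep_var borel X2 borel X4"
    and indep: "indep_var borel (\<lambda>\<omega>. X1 \<omega> - X3 \<omega>) borel (\<lambda>\<omega>. X2 \<omega> - X4 \<omega>)"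
    and X1: "centered_gaussian_vector M X1 S" and X2: "centered_gaussian_vector M X2 S"
    and X3: "centered_gaussian_vector M X3 S" and X4: "centered_gaussian_vector M X4 S"
    and sym: "transpose S = S" and psd: "\<forall>v. 0 \<le> v \<bullet> (S *v v)"
  shows "(\<integral>\<^sup>+\<omega>. ennreal (((1/4) * ((X1 \<omega> - X3 \<omega>) \<bullet> (X2 \<omega> - X4 \<omega>))\<^sup>2) ^ k) \<partial>M)
    \<le> ennreal (real k ^ (2 * k) * trace (S ** S) ^ k)"
proof -
  define T where "T = trace (S ** S)"
  have T: "0 \<le> T"
    unfolding T_def using sym by (rule trace_square_nonneg)
  have "(\<integral>\<^sup>+\<omega>. ennreal (((1/4) * ((X1 \<omega> - X3 \<omega>) \<bullet> (X2 \<omega> - X4 \<omega>))\<^sup>2) ^ k) \<partial>M)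
      \<le> ennreal ((1/4) ^ k * (gauss_moment k * 2 ^ k)) * ennreal (gauss_moment k * (2 * T) ^ k)"
    unfolding kernel_term_nn_moment_eq[OF indep13 indep X1 X2 X3 X4 psd] T_def
    by (intro mult_left_mono gaussian_diff_quadratic_form_moments(1)[OF indep24 X2 X4 sym psd]) simp
  also have "\<dots> = ennreal (gauss_moment k * gauss_moment k * T ^ k)"
  proof -
    have four: "(2::real) ^ k * 2 ^ k = 4 ^ k"
      by (simp flip: power_mult_distrib)
    have "(1/4) ^ k * (gauss_moment k * 2 ^ k) * (gauss_moment k * (2 * T) ^ k)
        = gauss_moment k * gauss_moment k * T ^ k * ((2 ^ k * 2 ^ k) / 4 ^ k)"
      by (simp add: power_mult_distrib power_one_over)
    then show ?thesis
      unfolding four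
      using gauss_moment_pos[of k] T by (simp flip: ennreal_mult)
  qed
  also have "\<dots> \<le> ennreal (real k ^ (2 * k) * T ^ k)"
  proof (intro ennreal_leI mult_right_mono)
    show "gauss_moment k * gauss_moment k \<le> real k ^ (2 * k)"
      using gauss_moment_le_power[of k] gauss_moment_pos[of k]
      by (simp add: mult_2 power_add mult_mono less_imp_le)
  qed (use T in simp)
  finally show ?thesis
    by (simp add: T_def)
qed

lemma kernel_term_nn_mean:
  fixes X1 X2 X3 X4 :: "'a \<Rightarrow> real^'d"
  assumes indep13: "indep_var borel X1 borel X3" and indep24: "indep_var borel X2 borel X4"
    and indep: "indep_var borel (\<lambda>\<omega>. X1 \<omega> - X3 \<omega>) borel (\<lambda>\<omega>. X2 \<omega> - X4 \<omega>)"
    and X1: "centered_gaussian_vector M X1 S" and X2: "centered_gaussian_vector M X2 S"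
    and X3: "centered_gaussian_vector M X3 S" and X4: "centered_gaussian_vector M X4 S"
    and sym: "transpose S = S" and psd: "\<forall>v. 0 \<le> v \<bullet> (S *v v)"
  shows "(\<integral>\<^sup>+\<omega>. ennreal ((1/4) * ((X1 \<omega> - X3 \<omega>) \<bullet> (X2 \<omega> - X4 \<omega>))\<^sup>2) \<partial>M) = ennreal (trace (S ** S))"
proof -
  have "(\<integral>\<^sup>+\<omega>. ennreal ((1/4) * ((X1 \<omega> - X3 \<omega>) \<bullet> (X2 \<omega> - X4 \<omega>))\<^sup>2) \<partial>M)
      = ennreal ((1/4) * (gauss_moment 1 * 2)) * ennreal (2 * trace (S ** S))"
    using kernel_term_nn_moment_eq[OF indep13 indep X1 X2 X3 X4 psd, of 1]
      gaussian_diff_quadratic_form_moments(2)[OF indep24 X2 X4 sym psd]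
    by (simp only: power_one_right)
  also have "\<dots> = ennreal ((1/4) * (gauss_moment 1 * 2) * (2 * trace (S ** S)))"
    by (rule ennreal_mult'[symmetric]) (simp add: gauss_moment_pos less_imp_le)
  also have "\<dots> = ennreal (trace (S ** S))"
    by (simp add: gauss_moment_Suc)
  finally show ?thesis .
qed

section \<open>Moments of sums of independent centered variables\<close>

lemma nonneg_minus_mean_moments:
  fixes Z :: "'a \<Rightarrow> real"
  assumes [measurable]: "Z \<in> borel_measurable M" and Z: "\<And>\<omega>. 0 \<le> Z \<omega>"
    and b: "\<And>k. 0 \<le> b k" and moments: "\<And>k. (\<integral>\<^sup>+\<omega>. ennreal (Z \<omega> ^ k) \<partial>M) \<le> ennreal (b k)"
    and \<mu>: "0 \<le> \<mu>" and mean: "(\<integral>\<^sup>+\<omega>. ennreal (Z \<omega>) \<partial>M) = ennreal \<mu>"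
  shows "integrable M (\<lambda>\<omega>. (Z \<omega> - \<mu>) ^ n)" and "expectation (\<lambda>\<omega>. Z \<omega> - \<mu>) = 0"
    and "expectation (\<lambda>\<omega>. \<bar>Z \<omega> - \<mu>\<bar> ^ n) \<le> b n + \<mu> ^ n"
proof -
  have integrable_Z: "integrable M (\<lambda>\<omega>. Z \<omega> ^ k)" for k
  proof (rule integrableI_bounded)
    show "(\<integral>\<^sup>+\<omega>. ennreal (norm (Z \<omega> ^ k)) \<partial>M) < \<infinity>"
      using Z moments[of k] by (simp add: le_less_trans)
  qed simp
  have expectation_Z: "expectation (\<lambda>\<omega>. Z \<omega> ^ k) = enn2real (\<integral>\<^sup>+\<omega>. ennreal (Z \<omega> ^ k) \<partial>M)" for k
    using Z by (simp add: integral_eq_nn_integral)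
  have bound: "\<bar>Z \<omega> - \<mu>\<bar> ^ n \<le> Z \<omega> ^ n + \<mu> ^ n" for \<omega>
  proof -
    have "\<bar>Z \<omega> - \<mu>\<bar> ^ n \<le> max (Z \<omega>) \<mu> ^ n"
      using Z[of \<omega>] \<mu> by (intro power_mono) auto
    also have "\<dots> \<le> Z \<omega> ^ n + \<mu> ^ n"
      using Z[of \<omega>] \<mu> by (simp add: max_def)
    finally show ?thesis .
  qed
  have integrable_bound: "integrable M (\<lambda>\<omega>. Z \<omega> ^ n + \<mu> ^ n)"
    using integrable_Z by simp
  show "integrable M (\<lambda>\<omega>. (Z \<omega> - \<mu>) ^ n)"
    by (rule Bochner_Integration.integrable_bound[OF integrable_bound])
      (use bound Z \<mu> in \<open>auto simp: power_abs\<close>)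
  show "expectation (\<lambda>\<omega>. Z \<omega> - \<mu>) = 0"
    using integrable_Z[of 1] expectation_Z[of 1] mean \<mu> by (simp add: prob_space)
  have "expectation (\<lambda>\<omega>. \<bar>Z \<omega> - \<mu>\<bar> ^ n) \<le> expectation (\<lambda>\<omega>. Z \<omega> ^ n + \<mu> ^ n)"
    by (rule integral_mono[OF _ integrable_bound bound])
      (rule Bochner_Integration.integrable_bound[OF integrable_bound], use bound Z \<mu> in auto)
  also have "\<dots> = expectation (\<lambda>\<omega>. Z \<omega> ^ n) + \<mu> ^ n"
    using integrable_Z[of n] by (simp add: prob_space)
  also have "\<dots> \<le> b n + \<mu> ^ n"
    using moments[of n] b[of n] by (simp add: expectation_Z enn2real_leI)
  finally show "expectation (\<lambda>\<omega>. \<bar>Z \<omega> - \<mu>\<bar> ^ n) \<le> b n + \<mu> ^ n" .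
qed

lemma indep_var_restrict_compose:
  fixes F :: "'i \<Rightarrow> 'a \<Rightarrow> 'b::topological_space"
  assumes indep: "indep_vars (\<lambda>_. borel) F I" and AB: "A \<inter> B = {}" "A \<subseteq> I" "B \<subseteq> I"
    and g: "g \<in> borel_measurable (PiM A (\<lambda>_. borel))" and h: "h \<in> borel_measurable (PiM B (\<lambda>_. borel))"
  shows "indep_var borel (\<lambda>\<omega>. g (restrict (\<lambda>i. F i \<omega>) A)) borel (\<lambda>\<omega>. h (restrict (\<lambda>i. F i \<omega>) B))"
  using indep_var_compose[OF indep_var_restrict[OF indep AB] g h] by (simp add: comp_def)

lemma indep_vars_blocks:
  fixes F :: "'i \<times> 'j \<Rightarrow> 'a \<Rightarrow> 'b::topological_space"
  assumes indep: "indep_vars (\<lambda>_. borel) F (I \<times> J)"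
    and g: "\<And>i. i \<in> I \<Longrightarrow> g i \<in> borel_measurable (PiM ({i} \<times> J) (\<lambda>_. borel))"
  shows "indep_vars (\<lambda>_. borel) (\<lambda>i \<omega>. g i (restrict (\<lambda>p. F p \<omega>) ({i} \<times> J))) I"
proof -
  have "indep_vars (\<lambda>i. PiM ({i} \<times> J) (\<lambda>_. borel)) (\<lambda>i \<omega>. restrict (\<lambda>p. F p \<omega>) ({i} \<times> J)) I"
    by (rule indep_vars_restrict[OF indep]) (auto simp: disjoint_family_on_def)
  then show ?thesis
    using g by (rule indep_vars_compose2)
qed

lemma indep_var_power_sum_expectation:
  fixes X Y :: "'a \<Rightarrow> real"
  assumes indep: "indep_var borel X borel Y"
    and X: "\<And>k. integrable M (\<lambda>\<omega>. X \<omega> ^ k)" and Y: "\<And>k. integrable M (\<lambda>\<omega>. Y \<omega> ^ k)"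
  shows "integrable M (\<lambda>\<omega>. (X \<omega> + Y \<omega>) ^ n)"
    and "expectation (\<lambda>\<omega>. (X \<omega> + Y \<omega>) ^ n)
      = (\<Sum>k\<le>n. real (n choose k) * expectation (\<lambda>\<omega>. X \<omega> ^ k) * expectation (\<lambda>\<omega>. Y \<omega> ^ (n - k)))"
proof -
  have indep_powers: "indep_var borel (\<lambda>\<omega>. X \<omega> ^ k) borel (\<lambda>\<omega>. Y \<omega> ^ j)" for k j
    using indep_var_compose[OF indep, of "\<lambda>x. x ^ k" borel "\<lambda>y. y ^ j" borel] by (simp add: comp_def)
  have integrable_product: "integrable M (\<lambda>\<omega>. X \<omega> ^ k * Y \<omega> ^ j)" for k j
    by (rule indep_var_integrable[OF indep_powers X Y])
  have expectation_product:
    "expectation (\<lambda>\<omega>. X \<omega> ^ k * Y \<omega> ^ j) = expectation (\<lambda>\<omega>. X \<omega> ^ k) * expectation (\<lambda>\<omega>. Y \<omega> ^ j)" for k j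
    by (rule indep_var_lebesgue_integral[OF indep_powers X Y])
  have expand: "(X \<omega> + Y \<omega>) ^ n = (\<Sum>k\<le>n. real (n choose k) * (X \<omega> ^ k * Y \<omega> ^ (n - k)))" for \<omega>
    by (simp add: binomial_ring mult.assoc)
  show "integrable M (\<lambda>\<omega>. (X \<omega> + Y \<omega>) ^ n)"
    unfolding expand using integrable_product by auto
  show "expectation (\<lambda>\<omega>. (X \<omega> + Y \<omega>) ^ n)
      = (\<Sum>k\<le>n. real (n choose k) * expectation (\<lambda>\<omega>. X \<omega> ^ k) * expectation (\<lambda>\<omega>. Y \<omega> ^ (n - k)))"
    unfolding expand using integrable_product by (simp add: expectation_product mult.assoc)
qed

lemma abs_expectation_power_le:
  fixes Y :: "'a \<Rightarrow> real"
  shows "\<bar>expectation (\<lambda>\<omega>. Y \<omega> ^ n)\<bar> \<le> expectation (\<lambda>\<omega>. \<bar>Y \<omega>\<bar> ^ n)"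
  using integral_abs_bound[where f = "\<lambda>\<omega>. Y \<omega> ^ n"] by (simp add: power_abs)

lemma indep_add_moment_bound:
  fixes X Y :: "'a \<Rightarrow> real" and f a :: "nat \<Rightarrow> real" and l :: real
  assumes indep: "indep_var borel X borel Y"
    and X: "\<And>k. integrable M (\<lambda>\<omega>. X \<omega> ^ k)" and Y: "\<And>k. integrable M (\<lambda>\<omega>. Y \<omega> ^ k)"
    and centered: "expectation X = 0" and X_moments: "\<And>k. 2 \<le> k \<Longrightarrow> \<bar>expectation (\<lambda>\<omega>. X \<omega> ^ k)\<bar> \<le> a k"
    and Y_moments: "\<And>j. \<bar>expectation (\<lambda>\<omega>. Y \<omega> ^ j)\<bar> \<le> f j * sqrt l ^ j"
    and l: "1 \<le> l" and f_nonneg: "\<And>n. 0 \<le> f n"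
    and recursion: "\<And>n. 2 \<le> n \<Longrightarrow> (\<Sum>k=2..n. real (n choose k) * f (n - k) * a k) \<le> real n / 2 * f n"
  shows "\<bar>expectation (\<lambda>\<omega>. (X \<omega> + Y \<omega>) ^ n)\<bar> \<le> f n * sqrt (l + 1) ^ n"
  unfolding indep_var_power_sum_expectation(2)[OF indep X Y]
proof (rule binomial_convolution_bound[where a = a])
  show "expectation (\<lambda>\<omega>. X \<omega> ^ 0) = 1" "expectation (\<lambda>\<omega>. X \<omega> ^ 1) = 0"
    using centered by (simp_all add: prob_space)
qed (use X_moments Y_moments l f_nonneg recursion in auto)

lemma indep_sum_moment_bound:
  fixes Y :: "'i \<Rightarrow> 'a \<Rightarrow> real" and f a :: "nat \<Rightarrow> real"
  assumes indep: "indep_vars (\<lambda>_. borel) Y I" and I: "finite I" "I \<noteq> {}"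
    and integrable: "\<And>i n. i \<in> I \<Longrightarrow> integrable M (\<lambda>\<omega>. Y i \<omega> ^ n)"
    and centered: "\<And>i. i \<in> I \<Longrightarrow> expectation (Y i) = 0"
    and moments: "\<And>i n. i \<in> I \<Longrightarrow> 2 \<le> n \<Longrightarrow> expectation (\<lambda>\<omega>. \<bar>Y i \<omega>\<bar> ^ n) \<le> a n"
    and f0: "1 \<le> f 0" and f_nonneg: "\<And>n. 0 \<le> f n" and a_le_f: "\<And>n. 2 \<le> n \<Longrightarrow> a n \<le> f n"
    and recursion: "\<And>n. 2 \<le> n \<Longrightarrow> (\<Sum>k=2..n. real (n choose k) * f (n - k) * a k) \<le> real n / 2 * f n"
  shows "\<bar>expectation (\<lambda>\<omega>. (\<Sum>i\<in>I. Y i \<omega>) ^ n)\<bar> \<le> f n * sqrt (card I) ^ n"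
proof -
  have single: "\<bar>expectation (\<lambda>\<omega>. Y i \<omega> ^ n)\<bar> \<le> a n" if "i \<in> I" "2 \<le> n" for i n
    using abs_expectation_power_le moments[OF that] by (rule order_trans)
  have "\<forall>n. integrable M (\<lambda>\<omega>. (\<Sum>i\<in>J. Y i \<omega>) ^ n)
      \<and> \<bar>expectation (\<lambda>\<omega>. (\<Sum>i\<in>J. Y i \<omega>) ^ n)\<bar> \<le> f n * sqrt (card J) ^ n"
    if "finite J" "J \<noteq> {}" "J \<subseteq> I" for J
    using that
  proof (induction J rule: finite_ne_induct)
    case (singleton i)
    have "\<bar>expectation (\<lambda>\<omega>. Y i \<omega> ^ n)\<bar> \<le> f n" for n
    proof -
      consider "n = 0" | "n = 1" | "2 \<le> n"
        by linarith
      then show ?thesis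
        using singleton f0 f_nonneg[of 1] single[of i n] a_le_f[of n] centered[of i]
        by cases (simp_all add: prob_space)
    qed
    then show ?case
      using singleton integrable by simp
  next
    case (insert i J)
    have indep_iJ: "indep_var borel (Y i) borel (\<lambda>\<omega>. \<Sum>j\<in>J. Y j \<omega>)"
      using insert indep_vars_subset[OF indep insert.prems] by (intro indep_vars_sum) auto
    have IH: "integrable M (\<lambda>\<omega>. (\<Sum>j\<in>J. Y j \<omega>) ^ n)"
      "\<bar>expectation (\<lambda>\<omega>. (\<Sum>j\<in>J. Y j \<omega>) ^ n)\<bar> \<le> f n * sqrt (card J) ^ n" for n
      using insert by auto
    have Y_i: "integrable M (\<lambda>\<omega>. Y i \<omega> ^ n)" for n
      using insert.prems integrable by simp
    have "\<bar>expectation (\<lambda>\<omega>. (Y i \<omega> + (\<Sum>j\<in>J. Y j \<omega>)) ^ n)\<bar> \<le> f n * sqrt (real (card J) + 1) ^ n" for n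
      using insert.prems insert.hyps single centered
      by (intro indep_add_moment_bound[OF indep_iJ Y_i IH(1) _ _ IH(2) _ f_nonneg recursion])
        (auto simp: Suc_le_eq card_gt_0_iff)
    then show ?case
      using insert indep_var_power_sum_expectation(1)[OF indep_iJ Y_i IH(1)] by (simp add: add.commute)
  qed
  then show ?thesis
    using I by blast
qed

lemma indep_sum_moment_bound_power:
  fixes Y :: "'i \<Rightarrow> 'a \<Rightarrow> real"
  assumes indep: "indep_vars (\<lambda>_. borel) Y I" and I: "finite I" "I \<noteq> {}"
    and integrable: "\<And>i n. i \<in> I \<Longrightarrow> integrable M (\<lambda>\<omega>. Y i \<omega> ^ n)"
    and centered: "\<And>i. i \<in> I \<Longrightarrow> expectation (Y i) = 0"
    and moments: "\<And>i n. i \<in> I \<Longrightarrow> 1 \<le> n \<Longrightarrow> expectation (\<lambda>\<omega>. \<bar>Y i \<omega>\<bar> ^ n) \<le> 2 * real n ^ (2 * n) * T ^ n"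
    and T: "0 \<le> T"
  shows "\<bar>expectation (\<lambda>\<omega>. (\<Sum>i\<in>I. Y i \<omega>) ^ n)\<bar> \<le> (2 * real n ^ 2 * T) ^ n * sqrt (card I) ^ n"
proof (rule indep_sum_moment_bound[OF indep I integrable centered])
  show "2 * real n ^ (2 * n) * T ^ n \<le> (2 * real n ^ 2 * T) ^ n" if "2 \<le> n" for n
  proof -
    have "(2::real) \<le> 2 ^ n"
      using power_increasing[of 1 n "2::real"] that by simp
    then show ?thesis
      using T by (simp add: power_mult_distrib power_mult[symmetric] mult_right_mono)
  qed
  show "(\<Sum>k=2..n. real (n choose k) * (2 * real (n - k) ^ 2 * T) ^ (n - k) * (2 * real k ^ (2 * k) * T ^ k))
      \<le> real n / 2 * (2 * real n ^ 2 * T) ^ n" if "2 \<le> n" for n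
    using T that by (rule binomial_moment_recursion)
qed (use moments T in auto)

lemma expectation_mean_power_le:
  fixes Y :: "nat \<Rightarrow> 'a \<Rightarrow> real"
  assumes m: "1 \<le> m" and C: "0 \<le> C"
    and bound: "\<bar>expectation (\<lambda>\<omega>. (\<Sum>i=1..m. Y i \<omega>) ^ (2 * q))\<bar> \<le> C ^ (2 * q) * real m ^ q"
  shows "expectation (\<lambda>\<omega>. ((1 / real m) * (\<Sum>i=1..m. Y i \<omega>)) ^ (2 * q)) \<le> (C / sqrt (real m)) ^ (2 * q)"
proof -
  have "expectation (\<lambda>\<omega>. ((1 / real m) * (\<Sum>i=1..m. Y i \<omega>)) ^ (2 * q))
      = (1 / real m) ^ (2 * q) * expectation (\<lambda>\<omega>. (\<Sum>i=1..m. Y i \<omega>) ^ (2 * q))"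
    unfolding power_mult_distrib by (rule integral_mult_right_zero)
  also have "\<dots> \<le> (1 / real m) ^ (2 * q) * (C ^ (2 * q) * real m ^ q)"
    using bound by (intro mult_left_mono) auto
  also have "\<dots> = (C / sqrt (real m)) ^ (2 * q)"
  proof -
    have "sqrt (real m) ^ (2 * q) = real m ^ q"
      by (simp add: power_mult)
    moreover have "real m ^ (2 * q) = real m ^ q * real m ^ q"
      by (simp add: mult_2 power_add)
    ultimately show ?thesis
      using m by (simp add: power_divide)
  qed
  finally show ?thesis .
qed

section \<open>The kernel estimator\<close>

lemma centered_kernel_term_moments:
  fixes F :: "'i \<Rightarrow> 'a \<Rightarrow> real^'d"
  assumes indep: "indep_vars (\<lambda>_. borel) F I" and abcd: "{a, b, c, d} \<subseteq> I" "distinct [a, b, c, d]"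
    and gaussian: "\<And>j. j \<in> {a, b, c, d} \<Longrightarrow> centered_gaussian_vector M (F j) S"
    and sym: "transpose S = S" and psd: "\<forall>v. 0 \<le> v \<bullet> (S *v v)"
  defines "Y \<equiv> \<lambda>\<omega>. (1/4) * ((F a \<omega> - F c \<omega>) \<bullet> (F b \<omega> - F d \<omega>))\<^sup>2 - trace (S ** S)"
  shows "integrable M (\<lambda>\<omega>. Y \<omega> ^ n)" and "expectation Y = 0"
    and "1 \<le> n \<Longrightarrow> expectation (\<lambda>\<omega>. \<bar>Y \<omega>\<bar> ^ n) \<le> 2 * real n ^ (2 * n) * trace (S ** S) ^ n"
proof -
  define T where "T = trace (S ** S)"
  have T: "0 \<le> T"
    unfolding T_def using sym by (rule trace_square_nonneg)
  have [measurable]: "F j \<in> borel_measurable M" if "j \<in> {a, b, c, d}" for j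
    using gaussian[OF that] by (rule centered_gaussian_vector_measurable)
  have "indep_var borel (F a) borel (F c)" "indep_var borel (F b) borel (F d)"
    "indep_var borel (\<lambda>\<omega>. F a \<omega> - F c \<omega>) borel (\<lambda>\<omega>. F b \<omega> - F d \<omega>)"
    using indep_var_restrict_compose[OF indep, of "{a}" "{c}" "\<lambda>x. x a" "\<lambda>x. x c"]
      indep_var_restrict_compose[OF indep, of "{b}" "{d}" "\<lambda>x. x b" "\<lambda>x. x d"]
      indep_var_restrict_compose[OF indep, of "{a, c}" "{b, d}" "\<lambda>x. x a - x c" "\<lambda>x. x b - x d"]
      abcd by (auto simp: measurable_component_singleton)
  note pairs = this
  note Z = kernel_term_nn_moment_le[OF pairs gaussian gaussian gaussian gaussian sym psd]
    kernel_term_nn_mean[OF pairs gaussian gaussian gaussian gaussian sym psd]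
  have minus_mean: "integrable M (\<lambda>\<omega>. Y \<omega> ^ n)" "expectation Y = 0"
    "expectation (\<lambda>\<omega>. \<bar>Y \<omega>\<bar> ^ n) \<le> real n ^ (2 * n) * T ^ n + T ^ n"
    unfolding Y_def T_def
    by (rule nonneg_minus_mean_moments[OF _ _ _ Z(1) _ Z(2)]; use T in \<open>simp add: T_def\<close>)+
  then show "integrable M (\<lambda>\<omega>. Y \<omega> ^ n)" "expectation Y = 0"
    by simp_all
  assume "1 \<le> n"
  then have "T ^ n \<le> real n ^ (2 * n) * T ^ n"
    using T by (simp add: mult_le_cancel_right1)
  then show "expectation (\<lambda>\<omega>. \<bar>Y \<omega>\<bar> ^ n) \<le> 2 * real n ^ (2 * n) * trace (S ** S) ^ n"
    using minus_mean(3) by (simp add: T_def)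
qed

lemma kernel_sum_moment_bound:
  fixes X :: "nat \<Rightarrow> nat \<Rightarrow> 'a \<Rightarrow> real^'d"
  assumes m: "1 \<le> m" and sym: "transpose S = S" and psd: "\<forall>v. 0 \<le> v \<bullet> (S *v v)"
    and indep: "indep_vars (\<lambda>_. borel) (\<lambda>(i, j). X i j) ({1..m} \<times> {1..4})"
    and gaussian: "\<forall>i\<in>{1..m}. \<forall>j\<in>{1..4::nat}. centered_gaussian_vector M (X i j) S"
  defines "Y \<equiv> \<lambda>i \<omega>. (1/4) * ((X i 1 \<omega> - X i 3 \<omega>) \<bullet> (X i 2 \<omega> - X i 4 \<omega>))\<^sup>2 - trace (S ** S)"
  shows "\<bar>expectation (\<lambda>\<omega>. (\<Sum>i=1..m. Y i \<omega>) ^ (2 * q))\<bar>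
    \<le> (8 * real q ^ 2 * trace (S ** S)) ^ (2 * q) * real m ^ q"
proof -
  have summand: "integrable M (\<lambda>\<omega>. Y i \<omega> ^ n) \<and> expectation (Y i) = 0
      \<and> (1 \<le> n \<longrightarrow> expectation (\<lambda>\<omega>. \<bar>Y i \<omega>\<bar> ^ n) \<le> 2 * real n ^ (2 * n) * trace (S ** S) ^ n)"
    if i: "i \<in> {1..m}" for i n
  proof -
    have block: "{(i, 1), (i, 2), (i, 3), (i, 4)} \<subseteq> {1..m} \<times> {1..4::nat}"
      "distinct [(i, 1), (i, 2), (i, 3), (i, 4::nat)]"
      using i by auto
    have "centered_gaussian_vector M ((\<lambda>(i, j). X i j) p) S" if "p \<in> {(i, 1), (i, 2), (i, 3), (i, 4)}" for p
      using that i gaussian by auto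
    from centered_kernel_term_moments[OF indep block this sym psd] show ?thesis
      by (simp add: Y_def)
  qed
  have "indep_vars (\<lambda>_. borel) Y {1..m}"
    using indep_vars_blocks[OF indep,
        of "\<lambda>i x. (1/4) * ((x (i, 1) - x (i, 3)) \<bullet> (x (i, 2) - x (i, 4)))\<^sup>2 - trace (S ** S)"]
    by (simp add: Y_def)
  then show ?thesis
    using indep_sum_moment_bound_power[where I = "{1..m}" and n = "2 * q"] summand
      trace_square_nonneg[OF sym] m
    by (simp add: power_mult_distrib power_mult)
qed

end

theorem lemma4:
  fixes M :: "'a measure" and X :: "nat \<Rightarrow> nat \<Rightarrow> 'a \<Rightarrow> real^'d"
    and S :: "real^'d^'d" and m q :: nat
  assumes "prob_space M"
    and "m \<ge> 1"
    and "transpose S = S"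
    and "\<forall>v. v \<bullet> (S *v v) \<ge> 0"
    and "prob_space.indep_vars M (\<lambda>_. borel) (\<lambda>(i, j). X i j)
           ({1..m} \<times> {1..4})"
    and "\<forall>i\<in>{1..m}. \<forall>j\<in>{1..4::nat}. centered_gaussian_vector M (X i j) S"
  shows "prob_space.expectation M
           (\<lambda>\<omega>. ((1 / real m) * (\<Sum>i=1..m.
               (1/4) * ((X i 1 \<omega> - X i 3 \<omega>) \<bullet> (X i 2 \<omega> - X i 4 \<omega>))^2)
             - trace (S ** S)) ^ (2 * q))
         \<le> (4 * sqrt 2 * ((1 + sqrt 5) / 2) * real q ^ 2 * trace (S ** S) / sqrt (real m))
             ^ (2 * q)"
proof -
  interpret prob_space M
    by (rule assms(1))
  let ?Z = "\<lambda>i \<omega>. (1/4) * ((X i 1 \<omega> - X i 3 \<omega>) \<bullet> (X i 2 \<omega> - X i 4 \<omega>))\<^sup>2"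
  have centered: "(1 / real m) * (\<Sum>i=1..m. ?Z i \<omega>) - trace (S ** S)
      = (1 / real m) * (\<Sum>i=1..m. ?Z i \<omega> - trace (S ** S))" for \<omega>
    using assms(2) by (simp add: sum_subtractf right_diff_distrib)
  have "expectation (\<lambda>\<omega>. ((1 / real m) * (\<Sum>i=1..m. ?Z i \<omega>) - trace (S ** S)) ^ (2 * q))
      \<le> (8 * real q ^ 2 * trace (S ** S) / sqrt (real m)) ^ (2 * q)"
    unfolding centered
    by (intro expectation_mean_power_le kernel_sum_moment_bound)
      (use assms trace_square_nonneg[OF assms(3)] in simp_all)
  also have "\<dots> \<le> (4 * sqrt 2 * ((1 + sqrt 5) / 2) * real q ^ 2 * trace (S ** S) / sqrt (real m)) ^ (2 * q)"
    using eight_le_golden_constant trace_square_nonneg[OF assms(3)]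
    by (intro power_mono divide_right_mono mult_right_mono) auto
  finally show ?thesis .
qed

end
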